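(* Let $F:[n]^\ell\to\mathbb{R}$ be permutation-invariant. For every $i\in\{1,\dots,\ell\}$, $$\mathbb{E}_{X\in[n]^i}[f_{i,F}(X)^2]=\frac{\eta_i}{\binom{\ell}{i}},$$ and this identity is derivable in degree $2$ sum-of-squares from the permutation-invariance axioms $\{F(x_1,\dots,x_\ell)=F(x_{\pi(1)},\dots,x_{\pi(\ell)})\}$, treating the values $F(X)$ as indeterminates.
   Context: $[n]=\mathbb{Z}/n\mathbb{Z}$, $\chi_T(x)=\prod_j e^{2\pi iT_jx_j/n}$, $\hat F(T)=\mathbb{E}_Y[F(Y)\overline{\chi_T(Y)}]$, $|T|=|\{j:T_j\ne0\}|$. $F_i=\sum_{T:|T|=i}\hat F(T)\chi_T$ and $\eta_i=\mathbb{E}_X[F_i(X)^2]$. $f_{i,F}:[n]^i\to\mathbb{C}$ is $f_{i,F}(x_1,\dots,x_i)=\sum_{(T_1,\dots,T_i)\in([n]\setminus\{0\})^i}\hat F(T_1,\dots,T_i,0,\dots,0)\chi_{T_1,\dots,T_i}(x_1,\dots,x_i)$. $F$ is permutation-invariant if invariant under permuting its $\ell$ coordinates. *)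

theory Defs
  imports "HOL-Analysis.Analysis" "HOL-Combinatorics.Permutations"
begin

definition cube :: "nat \<Rightarrow> nat \<Rightarrow> (nat \<Rightarrow> nat) set" where
  "cube n m = ({..<m} \<rightarrow>\<^sub>E {..<n})"

definition chi :: "nat \<Rightarrow> nat \<Rightarrow> (nat \<Rightarrow> nat) \<Rightarrow> (nat \<Rightarrow> nat) \<Rightarrow> complex" where
  "chi n m T x = (\<Prod>j<m. cis (2 * pi * real (T j) * real (x j) / real n))"

definition fourier :: "nat \<Rightarrow> nat \<Rightarrow> ((nat \<Rightarrow> nat) \<Rightarrow> real) \<Rightarrow> (nat \<Rightarrow> nat) \<Rightarrow> complex" where
  "fourier n l F T = (\<Sum>Y\<in>cube n l. complex_of_real (F Y) * cnj (chi n l T Y)) / of_nat (n ^ l)"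

definition wt :: "nat \<Rightarrow> (nat \<Rightarrow> nat) \<Rightarrow> nat" where
  "wt l T = card {j. j < l \<and> T j \<noteq> 0}"

definition level :: "nat \<Rightarrow> nat \<Rightarrow> ((nat \<Rightarrow> nat) \<Rightarrow> real) \<Rightarrow> nat \<Rightarrow> (nat \<Rightarrow> nat) \<Rightarrow> complex" where
  "level n l F i x = (\<Sum>T\<in>{T\<in>cube n l. wt l T = i}. fourier n l F T * chi n l T x)"

definition eta :: "nat \<Rightarrow> nat \<Rightarrow> ((nat \<Rightarrow> nat) \<Rightarrow> real) \<Rightarrow> nat \<Rightarrow> complex" where
  "eta n l F i = (\<Sum>X\<in>cube n l. (level n l F i X)^2) / of_nat (n ^ l)"

definition pad :: "nat \<Rightarrow> nat \<Rightarrow> (nat \<Rightarrow> nat) \<Rightarrow> (nat \<Rightarrow> nat)" where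
  "pad l i T = (\<lambda>j. if j < i then T j else if j < l then 0 else undefined)"

definition fpart :: "nat \<Rightarrow> nat \<Rightarrow> ((nat \<Rightarrow> nat) \<Rightarrow> real) \<Rightarrow> nat \<Rightarrow> (nat \<Rightarrow> nat) \<Rightarrow> complex" where
  "fpart n l F i x = (\<Sum>T\<in>({..<i} \<rightarrow>\<^sub>E {1..<n}). fourier n l F (pad l i T) * chi n i T x)"

definition perm_invariant :: "nat \<Rightarrow> nat \<Rightarrow> ((nat \<Rightarrow> nat) \<Rightarrow> real) \<Rightarrow> bool" where
  "perm_invariant n l F \<longleftrightarrow> (\<forall>x\<in>cube n l. \<forall>\<pi>. \<pi> permutes {..<l} \<longrightarrow> F x = F (x \<circ> \<pi>))"

definition discrepancy :: "nat \<Rightarrow> nat \<Rightarrow> ((nat \<Rightarrow> nat) \<Rightarrow> real) \<Rightarrow> nat \<Rightarrow> complex" where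
  "discrepancy n l F i =
     (\<Sum>X\<in>cube n i. (fpart n l F i X)^2) / of_nat (n ^ i) - eta n l F i / of_nat (l choose i)"

end

theory Submission
  imports Defs
begin

(* Characters of (Z/nZ)^m are orthogonal and chi_(-T) is the conjugate of chi_T, so the mean square of a
   character expansion sum_T a(T) chi_T is sum_T a(T) a(-T). For f_(i,F) the sum runs over T in
   ([n] - {0})^i padded with zeros, for eta_i over all T of weight i. If F is permutation-invariant, so is
   T |-> F^(T) F^(-T); grouping the T of weight i by their support, each of the (l choose i) supports
   contributes as much as {0, ..., i-1}.

   For the certificate, the discrepancy D is a real quadratic form in the values of G which vanishes at
   the symmetrisation H = avg_pi G(. o pi), since H is permutation-invariant. Polarisation writes
   D(G) = D(G) - D(H) as sum_Y (G Y - H Y) w(Y) with w linear in G, and G Y - H Y is the average of the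
   axioms G Y - G (Y o pi). *)

lemma sum_cis_root_unity:
  assumes n: "0 < n"
  shows "(\<Sum>x<n. cis (2 * pi * real k * real x / real n)) = (if n dvd k then of_nat n else 0)"
proof -
  define w where "w = cis (2 * pi * real k / real n)"
  have powers: "cis (2 * pi * real k * real x / real n) = w ^ x" for x
    unfolding w_def Complex.DeMoivre by (simp add: mult_ac)
  have "w ^ n = cis (2 * pi * real k)"
    using n unfolding w_def Complex.DeMoivre by simp
  then have "w ^ n = 1"
    by simp
  moreover have "w = 1 \<longleftrightarrow> n dvd k"
    using complex_root_unity_eq_1[of n k] n by (simp add: w_def cis_conv_exp mult_ac)
  ultimately show ?thesis
    by (auto simp: powers geometric_sum)
qed

lemma chi_mult:
  "chi n m T X * chi n m S X = (\<Prod>j<m. cis (2 * pi * real (T j + S j) * real (X j) / real n))"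
  unfolding chi_def prod.distrib[symmetric]
  by (intro prod.cong refl) (simp add: cis_mult add_divide_distrib algebra_simps)

lemma sum_chi_mult:
  assumes "0 < n"
  shows "(\<Sum>X\<in>cube n m. chi n m T X * chi n m S X)
           = (if \<forall>j<m. n dvd (T j + S j) then of_nat (n ^ m) else 0)"
proof -
  have "(\<Sum>X\<in>cube n m. chi n m T X * chi n m S X)
      = (\<Sum>X\<in>{..<m} \<rightarrow>\<^sub>E {..<n}. \<Prod>j<m. cis (2 * pi * real (T j + S j) * real (X j) / real n))"
    by (simp add: chi_mult cube_def)
  also have "\<dots> = (\<Prod>j<m. \<Sum>x<n. cis (2 * pi * real (T j + S j) * real x / real n))"
    by (rule prod_sum_PiE[symmetric]) auto
  also have "\<dots> = (\<Prod>j<m. if n dvd (T j + S j) then of_nat n else 0)"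
    using assms by (intro prod.cong refl sum_cis_root_unity)
  also have "\<dots> = (if \<forall>j<m. n dvd (T j + S j) then of_nat (n ^ m) else 0)"
    by (auto simp: prod_zero_iff)
  finally show ?thesis .
qed

lemma cis_eq_cnj_if_dvd_add:
  assumes n: "0 < n" and "n dvd (t + s)"
  shows "cis (2 * pi * real s * real x / real n) = cnj (cis (2 * pi * real t * real x / real n))"
proof -
  obtain q where q: "t + s = n * q"
    using assms(2) by auto
  have s: "real s = real n * real q - real t"
    using arg_cong[OF q, of real] by simp
  have "2 * pi * real s * real x / real n = 2 * pi * of_nat (q * x) - 2 * pi * real t * real x / real n"
    using n unfolding s by (simp add: field_simps)
  then show ?thesis
    by (simp add: cis_divide[symmetric] cis_cnj cis_inverse[symmetric] inverse_eq_divide del: of_nat_mult)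
qed

lemma finite_cube: "finite (cube n m)"
  by (simp add: cube_def finite_PiE)

definition cube_neg :: "nat \<Rightarrow> nat \<Rightarrow> (nat \<Rightarrow> nat) \<Rightarrow> (nat \<Rightarrow> nat)" where
  "cube_neg n m T = (\<lambda>j. if j < m then (n - T j) mod n else undefined)"

lemma dvd_add_iff_eq_neg_mod:
  fixes t s :: nat
  assumes "t < n" "s < n"
  shows "n dvd t + s \<longleftrightarrow> s = (n - t) mod n"
proof (cases "t = 0")
  case True
  then show ?thesis
    using assms by (auto dest: dvd_imp_le)
next
  case False
  have "n dvd t + s \<longleftrightarrow> t + s = n"
  proof
    assume "n dvd t + s"
    then obtain q where q: "t + s = n * q" ..
    have "q \<noteq> 0"
      using q False by (cases q) auto
    moreover have "n * q < n * 2"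
      using q assms by linarith
    ultimately have "q = 1"
      by simp
    with q show "t + s = n" by simp
  qed simp
  then show ?thesis
    using False assms by auto
qed

lemma cube_neg_in_cube: "0 < n \<Longrightarrow> cube_neg n m T \<in> cube n m"
  by (auto simp: cube_neg_def cube_def PiE_iff extensional_def)

lemma cube_neg_cube_neg:
  assumes "T \<in> cube n m"
  shows "cube_neg n m (cube_neg n m T) = T"
proof -
  have "(n - (n - t) mod n) mod n = t" if "t < n" for t
    using that by (cases "t = 0") auto
  then show ?thesis
    using assms by (auto simp: cube_neg_def cube_def PiE_def Pi_def extensional_def fun_eq_iff)
qed

lemma dvd_add_iff_eq_cube_neg:
  assumes "T \<in> cube n m" "S \<in> cube n m"
  shows "(\<forall>j<m. n dvd T j + S j) \<longleftrightarrow> S = cube_neg n m T"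
proof -
  have "(\<forall>j<m. n dvd T j + S j) \<longleftrightarrow> (\<forall>j<m. S j = (n - T j) mod n)"
    using assms by (auto simp: cube_def PiE_def Pi_def dvd_add_iff_eq_neg_mod)
  also have "\<dots> \<longleftrightarrow> S = cube_neg n m T"
    using assms by (auto simp: cube_neg_def cube_def PiE_def extensional_def fun_eq_iff)
  finally show ?thesis .
qed

lemma chi_cube_neg:
  assumes "0 < n" "T \<in> cube n m"
  shows "chi n m (cube_neg n m T) X = cnj (chi n m T X)"
proof -
  have "n dvd T j + cube_neg n m T j" if "j < m" for j
    using assms that by (simp add: cube_def PiE_def Pi_def dvd_add_iff_eq_neg_mod cube_neg_def)
  then show ?thesis
    unfolding chi_def cnj_prod using assms(1) by (intro prod.cong refl cis_eq_cnj_if_dvd_add) auto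
qed

lemma fourier_cube_neg:
  "0 < n \<Longrightarrow> T \<in> cube n l \<Longrightarrow> fourier n l F (cube_neg n l T) = cnj (fourier n l F T)"
  by (simp add: fourier_def cnj_sum chi_cube_neg)

lemma wt_cube_neg:
  assumes "T \<in> cube n m"
  shows "wt m (cube_neg n m T) = wt m T"
proof -
  have "(n - t) mod n = 0 \<longleftrightarrow> t = 0" if "t < n" for t
    using that by (cases "t = 0") auto
  then show ?thesis
    using assms unfolding wt_def cube_neg_def cube_def by (metis (lifting) PiE_mem lessThan_iff)
qed

lemma pad_cube_neg: "i \<le> l \<Longrightarrow> pad l i (cube_neg n i T) = cube_neg n l (pad l i T)"
  by (auto simp: pad_def cube_neg_def fun_eq_iff)

lemma cube_neg_comp_permutes:
  "p permutes {..<l} \<Longrightarrow> cube_neg n l (T \<circ> p) = cube_neg n l T \<circ> p"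
  using permutes_in_image[of p "{..<l}"] by (auto simp: cube_neg_def fun_eq_iff permutes_not_in)

lemma sum_square_sum_expand:
  fixes a :: "'b \<Rightarrow> 'c::comm_ring_1"
  shows "(\<Sum>X\<in>B. (\<Sum>T\<in>A. a T * c T X)^2) = (\<Sum>T\<in>A. \<Sum>S\<in>A. a T * a S * (\<Sum>X\<in>B. c T X * c S X))"
proof -
  have "(\<Sum>X\<in>B. (\<Sum>T\<in>A. a T * c T X)^2) = (\<Sum>X\<in>B. \<Sum>T\<in>A. \<Sum>S\<in>A. a T * a S * (c T X * c S X))"
    by (intro sum.cong refl) (simp add: power2_eq_square sum_product mult_ac)
  also have "\<dots> = (\<Sum>T\<in>A. \<Sum>S\<in>A. \<Sum>X\<in>B. a T * a S * (c T X * c S X))"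
    by (subst sum.swap) (simp add: sum.swap[of _ B])
  finally show ?thesis
    by (simp add: sum_distrib_left)
qed

lemma sum_square_char_expansion:
  assumes n: "0 < n" and A: "A \<subseteq> cube n m" "\<And>T. T \<in> A \<Longrightarrow> cube_neg n m T \<in> A"
  shows "(\<Sum>X\<in>cube n m. (\<Sum>T\<in>A. a T * chi n m T X)^2)
           = of_nat (n ^ m) * (\<Sum>T\<in>A. a T * a (cube_neg n m T))"
proof -
  have "finite A"
    using A(1) finite_cube by (rule finite_subset)
  have orth: "(\<Sum>X\<in>cube n m. chi n m T X * chi n m S X) = (if S = cube_neg n m T then of_nat (n ^ m) else 0)"
    if "T \<in> A" "S \<in> A" for T S
    using that A(1) dvd_add_iff_eq_cube_neg[of T n m S] by (auto simp: sum_chi_mult[OF n])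
  have "(\<Sum>X\<in>cube n m. (\<Sum>T\<in>A. a T * chi n m T X)^2)
      = (\<Sum>T\<in>A. \<Sum>S\<in>A. a T * a S * (\<Sum>X\<in>cube n m. chi n m T X * chi n m S X))"
    by (rule sum_square_sum_expand)
  also have "\<dots> = (\<Sum>T\<in>A. \<Sum>S\<in>A. a T * a S * (if S = cube_neg n m T then of_nat (n ^ m) else 0))"
    by (intro sum.cong refl) (simp add: orth)
  also have "\<dots> = (\<Sum>T\<in>A. a T * a (cube_neg n m T) * of_nat (n ^ m))"
    using \<open>finite A\<close> A(2) by (simp add: if_distrib[where f="\<lambda>z. _ * z"] sum.delta cong: if_cong)
  finally show ?thesis
    by (simp add: sum_distrib_left mult_ac)
qed

lemma cnj_char_expansion:
  assumes n: "0 < n" and A: "A \<subseteq> cube n m" "\<And>T. T \<in> A \<Longrightarrow> cube_neg n m T \<in> A"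
    and a: "\<And>T. T \<in> A \<Longrightarrow> a (cube_neg n m T) = cnj (a T)"
  shows "cnj (\<Sum>T\<in>A. a T * chi n m T X) = (\<Sum>T\<in>A. a T * chi n m T X)"
proof -
  have "cnj (\<Sum>T\<in>A. a T * chi n m T X) = (\<Sum>T\<in>A. a (cube_neg n m T) * chi n m (cube_neg n m T) X)"
    unfolding cnj_sum using A(1) by (intro sum.cong refl) (auto simp: a chi_cube_neg[OF n])
  also have "\<dots> = (\<Sum>T\<in>A. a T * chi n m T X)"
    using A by (intro sum.reindex_bij_witness[where i="cube_neg n m" and j="cube_neg n m"])
      (auto simp: cube_neg_cube_neg)
  finally show ?thesis .
qed

lemma nonzero_box_subset_cube: "{..<i} \<rightarrow>\<^sub>E {1..<n} \<subseteq> cube n i"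
  unfolding cube_def by (rule PiE_mono) auto

lemma cube_neg_in_nonzero_box:
  assumes "T \<in> {..<i} \<rightarrow>\<^sub>E {1..<n}"
  shows "cube_neg n i T \<in> {..<i} \<rightarrow>\<^sub>E {1..<n}"
proof -
  have "(n - T j) mod n \<in> {1..<n}" if "j < i" for j
  proof -
    have "T j \<in> {1..<n}"
      using PiE_mem[OF assms] that by simp
    then show ?thesis
      by auto
  qed
  then show ?thesis
    by (simp add: cube_neg_def PiE_iff extensional_def)
qed

lemma pad_in_cube:
  "0 < n \<Longrightarrow> i \<le> l \<Longrightarrow> T \<in> {..<i} \<rightarrow>\<^sub>E {1..<n} \<Longrightarrow> pad l i T \<in> cube n l"
  by (auto simp: pad_def cube_def PiE_iff extensional_def)

lemma fpart_real:
  assumes "0 < n" "i \<le> l"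
  shows "cnj (fpart n l F i X) = fpart n l F i X"
  unfolding fpart_def using assms
  by (intro cnj_char_expansion nonzero_box_subset_cube cube_neg_in_nonzero_box)
    (auto simp: pad_cube_neg fourier_cube_neg pad_in_cube)

lemma level_real:
  assumes "0 < n"
  shows "cnj (level n l F i X) = level n l F i X"
  unfolding level_def using assms
  by (intro cnj_char_expansion) (auto simp: cube_neg_in_cube wt_cube_neg fourier_cube_neg)

lemma discrepancy_real:
  assumes "0 < n" "i \<le> l"
  shows "complex_of_real (Re (discrepancy n l G i)) = discrepancy n l G i"
proof -
  have "cnj (discrepancy n l G i) = discrepancy n l G i"
    using assms by (simp add: discrepancy_def eta_def fpart_real level_real)
  then have "Im (discrepancy n l G i) = 0"
    by (simp add: complex_eq_iff)
  then show ?thesis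
    by (simp add: complex_eq_iff)
qed

lemma mean_square_fpart:
  assumes n: "0 < n"
  shows "(\<Sum>X\<in>cube n i. (fpart n l F i X)^2) / of_nat (n ^ i)
           = (\<Sum>T\<in>{..<i} \<rightarrow>\<^sub>E {1..<n}. fourier n l F (pad l i T) * fourier n l F (pad l i (cube_neg n i T)))"
  unfolding fpart_def
  by (subst sum_square_char_expansion[OF n nonzero_box_subset_cube cube_neg_in_nonzero_box])
    (use n in simp_all)

lemma eta_eq_sum_fourier_mult_cube_neg:
  assumes "0 < n"
  shows "eta n l F i = (\<Sum>T\<in>{T\<in>cube n l. wt l T = i}. fourier n l F T * fourier n l F (cube_neg n l T))"
  unfolding eta_def level_def using assms
  by (subst sum_square_char_expansion) (simp_all add: cube_neg_in_cube wt_cube_neg)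

lemma cube_comp_permutes: "p permutes {..<l} \<Longrightarrow> Y \<in> cube n l \<Longrightarrow> Y \<circ> p \<in> cube n l"
  using permutes_in_image[of p "{..<l}"]
  by (auto simp: cube_def PiE_def Pi_def extensional_def permutes_not_in)

lemma sum_cube_comp_permutes:
  assumes p: "p permutes {..<l}"
  shows "(\<Sum>Y\<in>cube n l. h (Y \<circ> p)) = (\<Sum>Y\<in>cube n l. h Y)"
  by (rule sum.reindex_bij_witness[where i="\<lambda>Y. Y \<circ> inv p" and j="\<lambda>Y. Y \<circ> p"])
    (auto simp: o_assoc[symmetric] permutes_inv_o[OF p] cube_comp_permutes[OF p]
      cube_comp_permutes[OF permutes_inv[OF p]])

lemma chi_comp_permutes: "p permutes {..<l} \<Longrightarrow> chi n l (S \<circ> p) (Y \<circ> p) = chi n l S Y"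
  unfolding chi_def by (subst (2) prod.permute[of p]) (simp_all add: o_def)

lemma fourier_comp_permutes:
  assumes p: "p permutes {..<l}" and F: "perm_invariant n l F"
  shows "fourier n l F (S \<circ> p) = fourier n l F S"
proof -
  have "(\<Sum>Y\<in>cube n l. complex_of_real (F Y) * cnj (chi n l (S \<circ> p) Y))
      = (\<Sum>Y\<in>cube n l. complex_of_real (F (Y \<circ> p)) * cnj (chi n l (S \<circ> p) (Y \<circ> p)))"
    by (rule sum_cube_comp_permutes[OF p, symmetric])
  also have "\<dots> = (\<Sum>Y\<in>cube n l. complex_of_real (F Y) * cnj (chi n l S Y))"
    using F p by (intro sum.cong refl) (simp add: perm_invariant_def chi_comp_permutes)
  finally show ?thesis
    by (simp add: fourier_def)
qed

definition supp :: "nat \<Rightarrow> (nat \<Rightarrow> nat) \<Rightarrow> nat set" where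
  "supp l T = {j. j < l \<and> T j \<noteq> 0}"

lemma supp_comp_permutes:
  assumes p: "p permutes {..<l}"
  shows "supp l (T \<circ> p) = inv p ` supp l T"
proof -
  have "supp l (T \<circ> p) = p -` supp l T"
    using permutes_in_image[OF p] by (auto simp: supp_def)
  then show ?thesis
    using bij_vimage_eq_inv_image[OF permutes_bij[OF p]] by simp
qed

lemma obtain_permutes_image_lessThan:
  assumes S: "S \<subseteq> {..<l}" "card S = i"
  obtains p where "p permutes {..<l}" "p ` {..<i} = S"
proof -
  have "finite S"
    using S(1) finite_subset by blast
  have "i \<le> l"
    using S card_mono[of "{..<l}" S] by simp
  obtain f where f: "bij_betw f {..<i} S"
    using finite_same_card_bij[of "{..<i}" S] \<open>finite S\<close> S(2) by auto
  have "card ({..<l} - S) = card {i..<l}"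
    using S \<open>finite S\<close> by (simp add: card_Diff_subset)
  then obtain h where h: "bij_betw h {i..<l} ({..<l} - S)"
    using finite_same_card_bij[of "{i..<l}" "{..<l} - S"] by auto
  define p where "p j = (if j < i then f j else if j < l then h j else j)" for j
  have low: "bij_betw p {..<i} S"
    using f by (rule bij_betw_cong[THEN iffD1, rotated]) (simp add: p_def)
  have high: "bij_betw p {i..<l} ({..<l} - S)"
    using h by (rule bij_betw_cong[THEN iffD1, rotated]) (simp add: p_def)
  have "bij_betw p ({..<i} \<union> {i..<l}) (S \<union> ({..<l} - S))"
    by (rule bij_betw_combine[OF low high]) auto
  moreover have "{..<i} \<union> {i..<l} = {..<l}" "S \<union> ({..<l} - S) = {..<l}"
    using \<open>i \<le> l\<close> S(1) by auto
  ultimately have "p permutes {..<l}"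
    by (intro bij_imp_permutes) (auto simp: p_def)
  moreover have "p ` {..<i} = S"
    using low by (simp add: bij_betw_def)
  ultimately show ?thesis
    by (rule that)
qed

lemma sum_supp_eq_sum_supp_lessThan:
  assumes S: "S \<subseteq> {..<l}" "card S = i"
    and g: "\<And>T p. T \<in> cube n l \<Longrightarrow> p permutes {..<l} \<Longrightarrow> g (T \<circ> p) = g T"
  shows "(\<Sum>T\<in>{T\<in>cube n l. supp l T = S}. g T) = (\<Sum>T\<in>{T\<in>cube n l. supp l T = {..<i}}. g T)"
proof -
  obtain p where p: "p permutes {..<l}" and pS: "p ` {..<i} = S"
    using obtain_permutes_image_lessThan[OF S] .
  have q: "inv p permutes {..<l}"
    using p by (rule permutes_inv)
  have "inv p ` S = {..<i}"
    unfolding pS[symmetric] by (rule image_inv_f_f[OF permutes_inj[OF p]])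
  moreover have "inv (inv p) ` {..<i} = S"
    using pS inv_inv_eq[OF permutes_bij[OF p]] by simp
  ultimately show ?thesis
    using p q
    by (intro sum.reindex_bij_witness[where i="\<lambda>U. U \<circ> inv p" and j="\<lambda>T. T \<circ> p"])
      (auto simp: o_assoc[symmetric] permutes_inv_o[OF p] cube_comp_permutes supp_comp_permutes g)
qed

lemma sum_supp_lessThan_eq_sum_pad:
  assumes "0 < n" "i \<le> l"
  shows "(\<Sum>T\<in>{T\<in>cube n l. supp l T = {..<i}}. g T) = (\<Sum>T\<in>{..<i} \<rightarrow>\<^sub>E {1..<n}. g (pad l i T))"
proof (rule sum.reindex_bij_witness[where i="pad l i" and j="\<lambda>U. restrict U {..<i}"])
  fix T assume T: "T \<in> {..<i} \<rightarrow>\<^sub>E {1..<n}"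
  show "restrict (pad l i T) {..<i} = T"
    using T by (auto simp: pad_def PiE_iff extensional_def)
  have "T j \<noteq> 0" if "j < i" for j
    using PiE_mem[OF T, of j] that by auto
  then have "supp l (pad l i T) = {..<i}"
    using assms(2) by (auto simp: supp_def pad_def)
  then show "pad l i T \<in> {T\<in>cube n l. supp l T = {..<i}}"
    using pad_in_cube[OF assms T] by simp
next
  fix U assume "U \<in> {T\<in>cube n l. supp l T = {..<i}}"
  then have U: "U \<in> cube n l" and zero: "\<And>j. j < l \<Longrightarrow> U j \<noteq> 0 \<longleftrightarrow> j < i"
    using assms(2) by (auto simp: supp_def)
  show "pad l i (restrict U {..<i}) = U"
    using U zero assms(2) by (auto simp: pad_def cube_def PiE_def extensional_def fun_eq_iff)
  then show "g (pad l i (restrict U {..<i})) = g U"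
    by simp
  have "U j \<in> {1..<n}" if "j < i" for j
    using U zero[of j] that assms(2) by (auto simp: cube_def PiE_def Pi_def)
  then show "restrict U {..<i} \<in> {..<i} \<rightarrow>\<^sub>E {1..<n}"
    by simp
qed

lemma sum_wt_eq_choose_mult_sum_pad:
  assumes "0 < n" "i \<le> l"
    and g: "\<And>T p. T \<in> cube n l \<Longrightarrow> p permutes {..<l} \<Longrightarrow> g (T \<circ> p) = g T"
  shows "(\<Sum>T\<in>{T\<in>cube n l. wt l T = i}. g T) = of_nat (l choose i) * (\<Sum>T\<in>{..<i} \<rightarrow>\<^sub>E {1..<n}. g (pad l i T))"
proof -
  let ?supports = "{S. S \<subseteq> {..<l} \<and> card S = i}"
  have "supp l ` {T\<in>cube n l. wt l T = i} \<subseteq> ?supports"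
    by (auto simp: supp_def wt_def)
  then have "(\<Sum>T\<in>{T\<in>cube n l. wt l T = i}. g T)
      = (\<Sum>S\<in>?supports. \<Sum>T\<in>{T\<in>{T\<in>cube n l. wt l T = i}. supp l T = S}. g T)"
    by (intro sum.group[symmetric]) (simp_all add: finite_cube)
  also have "\<dots> = (\<Sum>S\<in>?supports. \<Sum>T\<in>{T\<in>cube n l. supp l T = {..<i}}. g T)"
  proof (rule sum.cong[OF refl])
    fix S assume S: "S \<in> ?supports"
    then have "{T\<in>{T\<in>cube n l. wt l T = i}. supp l T = S} = {T\<in>cube n l. supp l T = S}"
      by (auto simp: wt_def supp_def)
    then show "(\<Sum>T\<in>{T\<in>{T\<in>cube n l. wt l T = i}. supp l T = S}. g T)
        = (\<Sum>T\<in>{T\<in>cube n l. supp l T = {..<i}}. g T)"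
      using S g by (simp add: sum_supp_eq_sum_supp_lessThan)
  qed
  also have "\<dots> = of_nat (l choose i) * (\<Sum>T\<in>{T\<in>cube n l. supp l T = {..<i}}. g T)"
    using n_subsets[of "{..<l}" i] by simp
  also have "(\<Sum>T\<in>{T\<in>cube n l. supp l T = {..<i}}. g T) = (\<Sum>T\<in>{..<i} \<rightarrow>\<^sub>E {1..<n}. g (pad l i T))"
    by (rule sum_supp_lessThan_eq_sum_pad[OF assms(1,2)])
  finally show ?thesis .
qed

theorem mean_square_fpart_eq_eta_div_choose:
  assumes n: "0 < n" and il: "i \<le> l" and F: "perm_invariant n l F"
  shows "(\<Sum>X\<in>cube n i. (fpart n l F i X)^2) / of_nat (n ^ i) = eta n l F i / of_nat (l choose i)"
proof -
  have "eta n l F i = of_nat (l choose i)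
      * (\<Sum>T\<in>{..<i} \<rightarrow>\<^sub>E {1..<n}. fourier n l F (pad l i T) * fourier n l F (cube_neg n l (pad l i T)))"
    unfolding eta_eq_sum_fourier_mult_cube_neg[OF n]
    by (rule sum_wt_eq_choose_mult_sum_pad[OF n il])
      (simp add: fourier_comp_permutes[OF _ F] cube_neg_comp_permutes)
  moreover note mean_square_fpart[OF n, where F=F]
  ultimately show ?thesis
    using il by (simp add: pad_cube_neg)
qed

lemma quadratic_form_diff:
  fixes \<beta> :: "'a \<Rightarrow> 'a \<Rightarrow> 'c::comm_ring"
  shows "(\<Sum>Y\<in>C. \<Sum>Z\<in>C. \<beta> Y Z * G Y * G Z) - (\<Sum>Y\<in>C. \<Sum>Z\<in>C. \<beta> Y Z * H Y * H Z)
           = (\<Sum>Y\<in>C. (G Y - H Y) * ((\<Sum>Z\<in>C. \<beta> Y Z * G Z) + (\<Sum>Z\<in>C. \<beta> Z Y * H Z)))"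
proof -
  have "(\<Sum>Y\<in>C. \<Sum>Z\<in>C. \<beta> Y Z * G Y * G Z) - (\<Sum>Y\<in>C. \<Sum>Z\<in>C. \<beta> Y Z * H Y * H Z)
      = (\<Sum>Y\<in>C. \<Sum>Z\<in>C. \<beta> Y Z * (G Y - H Y) * G Z) + (\<Sum>Y\<in>C. \<Sum>Z\<in>C. \<beta> Y Z * H Y * (G Z - H Z))"
    by (simp add: sum_subtractf[symmetric] sum.distrib[symmetric] algebra_simps)
  also have "(\<Sum>Y\<in>C. \<Sum>Z\<in>C. \<beta> Y Z * H Y * (G Z - H Z)) = (\<Sum>Y\<in>C. \<Sum>Z\<in>C. \<beta> Z Y * H Z * (G Y - H Y))"
    by (rule sum.swap)
  finally show ?thesis
    by (simp add: sum.distrib[symmetric] sum_distrib_left algebra_simps)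
qed

lemma sum_comp_eq_linear_form:
  fixes k :: "'a \<Rightarrow> 'b \<Rightarrow> 'c::semiring_0"
  assumes "finite C" and act: "\<And>Z s. Z \<in> C \<Longrightarrow> s \<in> P \<Longrightarrow> act Z s \<in> C"
  shows "(\<Sum>Z\<in>C. \<Sum>s\<in>P. k Z s * G (act Z s))
           = (\<Sum>W\<in>C. (\<Sum>Z\<in>C. \<Sum>s\<in>P. if act Z s = W then k Z s else 0) * G W)"
proof -
  have "(\<Sum>Z\<in>C. \<Sum>s\<in>P. k Z s * G (act Z s))
      = (\<Sum>Z\<in>C. \<Sum>s\<in>P. \<Sum>W\<in>C. (if act Z s = W then k Z s else 0) * G W)"
    using assms by (intro sum.cong refl) (simp add: if_distrib[of "\<lambda>x. x * G _"] sum.delta' cong: if_cong)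
  also have "\<dots> = (\<Sum>Z\<in>C. \<Sum>W\<in>C. \<Sum>s\<in>P. (if act Z s = W then k Z s else 0) * G W)"
    by (rule sum.cong[OF refl], rule sum.swap)
  also have "\<dots> = (\<Sum>W\<in>C. \<Sum>Z\<in>C. \<Sum>s\<in>P. (if act Z s = W then k Z s else 0) * G W)"
    by (rule sum.swap)
  finally show ?thesis
    by (simp add: sum_distrib_right)
qed

lemma quadratic_form_eq_sum_orbit_differences:
  fixes \<beta> :: "'a \<Rightarrow> 'a \<Rightarrow> 'c::field_char_0"
  assumes C: "finite C" and P: "finite P" "P \<noteq> {}"
    and act: "\<And>Y p. Y \<in> C \<Longrightarrow> p \<in> P \<Longrightarrow> act Y p \<in> C"
    and vanish: "\<And>G. (\<Sum>Y\<in>C. \<Sum>Z\<in>C. \<beta> Y Z * ((\<Sum>p\<in>P. G (act Y p)) / of_nat (card P))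
                                     * ((\<Sum>p\<in>P. G (act Z p)) / of_nat (card P))) = 0"
  shows "\<exists>a. \<forall>G. (\<Sum>Y\<in>C. \<Sum>Z\<in>C. \<beta> Y Z * G Y * G Z)
                 = (\<Sum>Y\<in>C. \<Sum>p\<in>P. (\<Sum>W\<in>C. a Y W * G W) * (G Y - G (act Y p)))"
proof -
  define L where "L = (of_nat (card P) :: 'c)"
  have "L \<noteq> 0"
    using P by (simp add: L_def)
  define a where "a Y W = (\<beta> Y W + (\<Sum>Z\<in>C. \<Sum>s\<in>P. if act Z s = W then \<beta> Z Y / L else 0)) / L" for Y W
  have "(\<Sum>Y\<in>C. \<Sum>Z\<in>C. \<beta> Y Z * G Y * G Z)
      = (\<Sum>Y\<in>C. \<Sum>p\<in>P. (\<Sum>W\<in>C. a Y W * G W) * (G Y - G (act Y p)))" for G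
  proof -
    define H where "H Y = (\<Sum>p\<in>P. G (act Y p)) / L" for Y
    have deviation: "G Y - H Y = (\<Sum>p\<in>P. G Y - G (act Y p)) / L" for Y
      using \<open>L \<noteq> 0\<close> by (simp add: H_def L_def sum_subtractf field_simps)
    have linear: "(\<Sum>Z\<in>C. \<beta> Y Z * G Z) + (\<Sum>Z\<in>C. \<beta> Z Y * H Z) = L * (\<Sum>W\<in>C. a Y W * G W)" for Y
    proof -
      have "(\<Sum>Z\<in>C. \<beta> Z Y * H Z) = (\<Sum>Z\<in>C. \<Sum>s\<in>P. \<beta> Z Y / L * G (act Z s))"
        by (simp add: H_def sum_distrib_left sum_divide_distrib)
      also have "\<dots> = (\<Sum>W\<in>C. (\<Sum>Z\<in>C. \<Sum>s\<in>P. if act Z s = W then \<beta> Z Y / L else 0) * G W)"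
        by (rule sum_comp_eq_linear_form[OF C act])
      also have "(\<Sum>Z\<in>C. \<beta> Y Z * G Z) + \<dots> = (\<Sum>W\<in>C. L * a Y W * G W)"
        using \<open>L \<noteq> 0\<close> by (simp add: a_def sum.distrib[symmetric] distrib_right)
      finally show ?thesis
        by (simp add: sum_distrib_left mult.assoc)
    qed
    have "(\<Sum>Y\<in>C. \<Sum>Z\<in>C. \<beta> Y Z * G Y * G Z)
        = (\<Sum>Y\<in>C. \<Sum>Z\<in>C. \<beta> Y Z * G Y * G Z) - (\<Sum>Y\<in>C. \<Sum>Z\<in>C. \<beta> Y Z * H Y * H Z)"
      using vanish[of G] by (simp add: H_def L_def)
    also have "\<dots> = (\<Sum>Y\<in>C. (G Y - H Y) * ((\<Sum>Z\<in>C. \<beta> Y Z * G Z) + (\<Sum>Z\<in>C. \<beta> Z Y * H Z)))"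
      by (rule quadratic_form_diff)
    also have "\<dots> = (\<Sum>Y\<in>C. (\<Sum>p\<in>P. G Y - G (act Y p)) / L * (L * (\<Sum>W\<in>C. a Y W * G W)))"
      by (simp only: deviation linear)
    also have "\<dots> = (\<Sum>Y\<in>C. (\<Sum>W\<in>C. a Y W * G W) * (\<Sum>p\<in>P. G Y - G (act Y p)))"
      using \<open>L \<noteq> 0\<close> by (simp add: mult.commute)
    also have "\<dots> = (\<Sum>Y\<in>C. \<Sum>p\<in>P. (\<Sum>W\<in>C. a Y W * G W) * (G Y - G (act Y p)))"
      by (simp only: sum_distrib_left)
    finally show ?thesis .
  qed
  then show ?thesis
    by blast
qed

lemma sum_fourier_mult_eq_linear_form:
  "(\<Sum>T\<in>A. fourier n l G (h T) * e T)
     = (\<Sum>Y\<in>cube n l. complex_of_real (G Y) * (\<Sum>T\<in>A. cnj (chi n l (h T) Y) / of_nat (n ^ l) * e T))"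
proof -
  have "(\<Sum>T\<in>A. fourier n l G (h T) * e T)
      = (\<Sum>T\<in>A. \<Sum>Y\<in>cube n l. complex_of_real (G Y) * (cnj (chi n l (h T) Y) / of_nat (n ^ l) * e T))"
    by (simp add: fourier_def sum_divide_distrib sum_distrib_left sum_distrib_right mult_ac)
  also have "\<dots> = (\<Sum>Y\<in>cube n l. complex_of_real (G Y) * (\<Sum>T\<in>A. cnj (chi n l (h T) Y) / of_nat (n ^ l) * e T))"
    by (subst sum.swap) (simp add: sum_distrib_left)
  finally show ?thesis .
qed

lemma discrepancy_quadratic_form:
  "\<exists>\<beta>. \<forall>G. discrepancy n l G i
             = (\<Sum>Y\<in>cube n l. \<Sum>Z\<in>cube n l. \<beta> Y Z * complex_of_real (G Y) * complex_of_real (G Z))"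
proof -
  define kf where "kf Y X = (\<Sum>T\<in>{..<i} \<rightarrow>\<^sub>E {1..<n}. cnj (chi n l (pad l i T) Y) / of_nat (n ^ l) * chi n i T X)"
    for Y X
  define kl where "kl Y X = (\<Sum>T\<in>{T\<in>cube n l. wt l T = i}. cnj (chi n l T Y) / of_nat (n ^ l) * chi n l T X)"
    for Y X
  define \<beta> where "\<beta> Y Z = (\<Sum>X\<in>cube n i. kf Y X * kf Z X) / of_nat (n ^ i)
      - (\<Sum>X\<in>cube n l. kl Y X * kl Z X) / of_nat (n ^ l) / of_nat (l choose i)" for Y Z
  have "discrepancy n l G i
      = (\<Sum>Y\<in>cube n l. \<Sum>Z\<in>cube n l. \<beta> Y Z * complex_of_real (G Y) * complex_of_real (G Z))" for G
  proof -
    let ?g = "\<lambda>Y. complex_of_real (G Y)"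
    have "(\<Sum>X\<in>cube n i. (fpart n l G i X)^2)
        = (\<Sum>Y\<in>cube n l. \<Sum>Z\<in>cube n l. ?g Y * ?g Z * (\<Sum>X\<in>cube n i. kf Y X * kf Z X))"
      unfolding fpart_def sum_fourier_mult_eq_linear_form kf_def[symmetric] by (rule sum_square_sum_expand)
    moreover have "(\<Sum>X\<in>cube n l. (level n l G i X)^2)
        = (\<Sum>Y\<in>cube n l. \<Sum>Z\<in>cube n l. ?g Y * ?g Z * (\<Sum>X\<in>cube n l. kl Y X * kl Z X))"
      unfolding level_def sum_fourier_mult_eq_linear_form[where h="\<lambda>T. T"] kl_def[symmetric]
      by (rule sum_square_sum_expand)
    ultimately show ?thesis
      unfolding discrepancy_def eta_def \<beta>_def
      by (simp add: sum_divide_distrib sum_subtractf[symmetric] sum_distrib_left algebra_simps)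
  qed
  then show ?thesis
    by blast
qed

lemma perm_invariant_sum_comp_permutes:
  "perm_invariant n l (\<lambda>Y. (\<Sum>\<pi>\<in>{\<pi>. \<pi> permutes {..<l}}. G (Y \<circ> \<pi>)) / c)"
  unfolding perm_invariant_def
proof (intro ballI allI impI)
  fix Y :: "nat \<Rightarrow> nat" and \<sigma> assume "\<sigma> permutes {..<l}"
  then have "(\<Sum>\<pi>\<in>{\<pi>. \<pi> permutes {..<l}}. G (Y \<circ> \<pi>)) = (\<Sum>\<pi>\<in>{\<pi>. \<pi> permutes {..<l}}. G (Y \<circ> (\<sigma> \<circ> \<pi>)))"
    by (rule setum_permutations_compose_left)
  then show "(\<Sum>\<pi>\<in>{\<pi>. \<pi> permutes {..<l}}. G (Y \<circ> \<pi>)) / c = (\<Sum>\<pi>\<in>{\<pi>. \<pi> permutes {..<l}}. G (Y \<circ> \<sigma> \<circ> \<pi>)) / c"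
    by (simp add: o_assoc)
qed

lemma discrepancy_perm_certificate:
  assumes "0 < n" "i \<le> l"
  shows "\<exists>a. \<forall>G. discrepancy n l G i
           = complex_of_real (\<Sum>x\<in>cube n l. \<Sum>\<pi>\<in>{\<pi>. \<pi> permutes {..<l}}.
               (\<Sum>y\<in>cube n l. a x y * G y) * (G x - G (x \<circ> \<pi>)))"
proof -
  let ?P = "{\<pi>. \<pi> permutes {..<l}}"
  obtain \<beta> where \<beta>: "\<And>G. discrepancy n l G i
      = (\<Sum>Y\<in>cube n l. \<Sum>Z\<in>cube n l. \<beta> Y Z * complex_of_real (G Y) * complex_of_real (G Z))"
    using discrepancy_quadratic_form by blast
  have Re_discrepancy: "Re (discrepancy n l G i) = (\<Sum>Y\<in>cube n l. \<Sum>Z\<in>cube n l. Re (\<beta> Y Z) * G Y * G Z)" for G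
    by (simp add: \<beta>)
  have symmetrized: "discrepancy n l (\<lambda>Y. (\<Sum>\<pi>\<in>?P. G (Y \<circ> \<pi>)) / real (card ?P)) i = 0" for G
    using mean_square_fpart_eq_eta_div_choose[OF assms perm_invariant_sum_comp_permutes]
    by (simp add: discrepancy_def)
  have vanish: "(\<Sum>Y\<in>cube n l. \<Sum>Z\<in>cube n l. Re (\<beta> Y Z)
      * ((\<Sum>\<pi>\<in>?P. G (Y \<circ> \<pi>)) / real (card ?P)) * ((\<Sum>\<pi>\<in>?P. G (Z \<circ> \<pi>)) / real (card ?P))) = 0" for G
    using arg_cong[where f=Re, OF symmetrized[of G]] unfolding Re_discrepancy by simp
  have act: "Y \<circ> \<pi> \<in> cube n l" if "Y \<in> cube n l" "\<pi> \<in> ?P" for Y \<pi>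
    using that cube_comp_permutes by blast
  have "?P \<noteq> {}"
    using permutes_id by blast
  then obtain a where a: "\<And>G. (\<Sum>Y\<in>cube n l. \<Sum>Z\<in>cube n l. Re (\<beta> Y Z) * G Y * G Z)
      = (\<Sum>Y\<in>cube n l. \<Sum>\<pi>\<in>?P. (\<Sum>W\<in>cube n l. a Y W * G W) * (G Y - G (Y \<circ> \<pi>)))"
    using quadratic_form_eq_sum_orbit_differences[where act="\<lambda>Y \<pi>. Y \<circ> \<pi>",
        OF finite_cube finite_permutations[OF finite_lessThan] _ act vanish]
    by blast
  show ?thesis
  proof (intro exI[of _ a] allI)
    fix G
    have "discrepancy n l G i = complex_of_real (Re (discrepancy n l G i))"
      by (rule discrepancy_real[OF assms, symmetric])
    then show "discrepancy n l G i = complex_of_real (\<Sum>x\<in>cube n l. \<Sum>\<pi>\<in>?P.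
        (\<Sum>y\<in>cube n l. a x y * G y) * (G x - G (x \<circ> \<pi>)))"
      by (simp only: Re_discrepancy a)
  qed
qed

theorem lemmaC11:
  fixes n l i :: nat and F :: "(nat \<Rightarrow> nat) \<Rightarrow> real"
  assumes "0 < n" and "1 \<le> i" and "i \<le> l"
  shows "(perm_invariant n l F \<longrightarrow>
           (\<Sum>X\<in>cube n i. (fpart n l F i X)^2) / of_nat (n ^ i)
             = eta n l F i / of_nat (l choose i))
       \<and> (\<exists>(c :: (nat \<Rightarrow> nat) \<Rightarrow> (nat \<Rightarrow> nat) \<Rightarrow> real)
            (a :: (nat \<Rightarrow> nat) \<Rightarrow> (nat \<Rightarrow> nat) \<Rightarrow> (nat \<Rightarrow> nat) \<Rightarrow> real).
          \<forall>G :: (nat \<Rightarrow> nat) \<Rightarrow> real.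
            discrepancy n l G i =
              complex_of_real (\<Sum>x\<in>cube n l. \<Sum>\<pi>\<in>{\<pi>. \<pi> permutes {..<l}}.
                 (c x \<pi> + (\<Sum>y\<in>cube n l. a x \<pi> y * G y)) * (G x - G (x \<circ> \<pi>))))"
proof -
  obtain a where a: "\<And>G. discrepancy n l G i
      = complex_of_real (\<Sum>x\<in>cube n l. \<Sum>\<pi>\<in>{\<pi>. \<pi> permutes {..<l}}.
          (\<Sum>y\<in>cube n l. a x y * G y) * (G x - G (x \<circ> \<pi>)))"
    using discrepancy_perm_certificate[OF assms(1,3)] by blast
  show ?thesis
    using mean_square_fpart_eq_eta_div_choose[OF assms(1,3)]
    by (intro conjI impI exI[of _ "\<lambda>_ _. 0"] exI[of _ "\<lambda>x _ y. a x y"] allI) (simp_all add: a)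
qed

end
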